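(* Let $\varphi_1,\varphi_2:\mathbb{R}^d\to\mathbb{R}$ and suppose $x_{\varphi_1}\in\arg\min_x\varphi_1(x)$ and $x_{\varphi_2}\in\arg\min_x\varphi_2(x)$. (i) If each $\varphi_i$ admits a $\nu_{\varphi_i}$ error bound, then $$\nu_{\varphi_1}(\|x_{\varphi_1}-x_{\varphi_2}\|_2)+\nu_{\varphi_2}(\|x_{\varphi_1}-x_{\varphi_2}\|_2)\le \varphi_2(x_{\varphi_1})-\varphi_1(x_{\varphi_1})-\big(\varphi_2(x_{\varphi_2})-\varphi_1(x_{\varphi_2})\big).$$ (ii) If $\varphi_2-\varphi_1$ is differentiable and $\varphi_2$ has $\nu_{\varphi_2}$ gradient growth, then $$\nu_{\varphi_2}(\|x_{\varphi_1}-x_{\varphi_2}\|_2)\le \langle x_{\varphi_1}-x_{\varphi_2},\nabla(\varphi_2-\varphi_1)(x_{\varphi_1})\rangle .$$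
   Context: Let $\nu(r):=\inf\{s:\omega(s)\ge r\}$ be the generalized inverse of a non-decreasing function $\omega$ with $\omega(0)=0$. A function $\varphi$ admits a $\nu$ error bound if $\nu(\|x-x^*\|_2)\le\varphi(x)-\varphi(x^* )$ for $x^*=\arg\min_{x'}\varphi(x')$ and all $x\in\mathbb{R}^d$. A function $\varphi$ has $\nu$ gradient growth if $\varphi$ is subdifferentiable and $\nu(\|x-y\|_2)\le\langle y-x,u-v\rangle$ for all $x,y\in\mathbb{R}^d$ and all $u\in\partial\varphi(y)$, $v\in\partial\varphi(x)$, where $\partial$ denotes the subdifferential. *)

theory Defs
  imports "HOL-Analysis.Analysis"
begin

definition admissible_modulus :: "(real \<Rightarrow> real) \<Rightarrow> bool" where
  "admissible_modulus \<omega> \<longleftrightarrow> mono_on {0..} \<omega> \<and> \<omega> 0 = 0"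

text \<open>Generalized inverse nu(r) = inf {s >= 0. omega s >= r}, extended-real valued
  (inf of the empty set is +infinity).\<close>
definition gen_inv :: "(real \<Rightarrow> real) \<Rightarrow> real \<Rightarrow> ereal" where
  "gen_inv \<omega> r = Inf (ereal ` {s. 0 \<le> s \<and> \<omega> s \<ge> r})"

definition is_minimizer :: "('a \<Rightarrow> real) \<Rightarrow> 'a \<Rightarrow> bool" where
  "is_minimizer \<phi> x \<longleftrightarrow> (\<forall>y. \<phi> x \<le> \<phi> y)"

definition error_bound :: "(real \<Rightarrow> ereal) \<Rightarrow> ('a::real_normed_vector \<Rightarrow> real) \<Rightarrow> bool" where
  "error_bound \<nu> \<phi> \<longleftrightarrow>
     (\<forall>xs. is_minimizer \<phi> xs \<longrightarrow> (\<forall>x. \<nu> (norm (x - xs)) \<le> ereal (\<phi> x - \<phi> xs)))"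

definition subdiff :: "('a::real_inner \<Rightarrow> real) \<Rightarrow> 'a \<Rightarrow> 'a set" where
  "subdiff \<phi> x = {u. \<forall>z. \<phi> z \<ge> \<phi> x + inner u (z - x)}"

definition subdifferentiable :: "('a::real_inner \<Rightarrow> real) \<Rightarrow> bool" where
  "subdifferentiable \<phi> \<longleftrightarrow> (\<forall>x. subdiff \<phi> x \<noteq> {})"

definition gradient_growth :: "(real \<Rightarrow> ereal) \<Rightarrow> ('a::real_inner \<Rightarrow> real) \<Rightarrow> bool" where
  "gradient_growth \<nu> \<phi> \<longleftrightarrow> subdifferentiable \<phi> \<and>
     (\<forall>x y u v. u \<in> subdiff \<phi> y \<longrightarrow> v \<in> subdiff \<phi> x \<longrightarrow>
        \<nu> (norm (x - y)) \<le> ereal (inner (y - x) (u - v)))"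

end

theory Submission
  imports Defs
begin

text \<open>Part (i) is the sum of the two error bounds, each taken at the other minimizer.
  For part (ii), \<open>\<phi>2\<close> is convex, being subdifferentiable, so first-order optimality of x1
  for \<open>\<phi>1 = \<phi>2 - (\<phi>2 - \<phi>1)\<close> makes the gradient g of \<open>\<phi>2 - \<phi>1\<close> at x1 a subgradient of
  \<open>\<phi>2\<close> at x1; as 0 is a subgradient of \<open>\<phi>2\<close> at its minimizer x2, gradient growth applied
  to these two subgradients gives the claim.\<close>

lemma error_bounds_at_minimizers:
  fixes \<phi>1 \<phi>2 :: "'a::real_normed_vector \<Rightarrow> real"
  assumes "error_bound \<nu>1 \<phi>1" "error_bound \<nu>2 \<phi>2"
    and "is_minimizer \<phi>1 x1" "is_minimizer \<phi>2 x2"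
  shows "\<nu>1 (norm (x1 - x2)) + \<nu>2 (norm (x1 - x2))
           \<le> ereal (\<phi>2 x1 - \<phi>1 x1 - (\<phi>2 x2 - \<phi>1 x2))"
proof -
  have "\<nu>1 (norm (x1 - x2)) \<le> ereal (\<phi>1 x2 - \<phi>1 x1)"
    using assms(1,3) unfolding error_bound_def by (metis norm_minus_commute)
  moreover have "\<nu>2 (norm (x1 - x2)) \<le> ereal (\<phi>2 x1 - \<phi>2 x2)"
    using assms(2,4) unfolding error_bound_def by blast
  ultimately have "\<nu>1 (norm (x1 - x2)) + \<nu>2 (norm (x1 - x2))
      \<le> ereal (\<phi>1 x2 - \<phi>1 x1) + ereal (\<phi>2 x1 - \<phi>2 x2)"
    by (rule add_mono)
  then show ?thesis by (simp add: algebra_simps)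
qed

lemma zero_in_subdiff_iff_minimizer: "0 \<in> subdiff \<phi> x \<longleftrightarrow> is_minimizer \<phi> x"
  unfolding subdiff_def is_minimizer_def by simp

lemma convex_on_UNIV_if_subdifferentiable:
  fixes \<phi> :: "'a::real_inner \<Rightarrow> real"
  assumes "subdifferentiable \<phi>"
  shows "convex_on UNIV \<phi>"
proof (rule convex_onI)
  fix t :: real and x y :: 'a
  assume t: "0 < t" "t < 1"
  define p where "p = (1 - t) *\<^sub>R x + t *\<^sub>R y"
  obtain u where "u \<in> subdiff \<phi> p"
    using assms unfolding subdifferentiable_def by blast
  then have "\<phi> p - t * inner u (y - x) \<le> \<phi> x" "\<phi> p + (1 - t) * inner u (y - x) \<le> \<phi> y"
    unfolding subdiff_def p_def by (auto simp: algebra_simps dest: spec[of _ x] spec[of _ y])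
  then have "(1 - t) * (\<phi> p - t * inner u (y - x)) + t * (\<phi> p + (1 - t) * inner u (y - x))
      \<le> (1 - t) * \<phi> x + t * \<phi> y"
    using t by (intro add_mono mult_left_mono) auto
  then show "\<phi> p \<le> (1 - t) * \<phi> x + t * \<phi> y"
    by (simp add: algebra_simps)
qed simp

lemma has_derivative_le_if_eventually_increment_le:
  fixes f :: "'a::real_normed_vector \<Rightarrow> real"
  assumes "(f has_derivative f') (at x)"
    and "\<forall>\<^sub>F t in at_right 0. f (x + t *\<^sub>R d) - f x \<le> t * c"
  shows "f' d \<le> c"
proof -
  have "((\<lambda>t. x + t *\<^sub>R d) has_derivative (\<lambda>t. t *\<^sub>R d)) (at 0 within {0<..})"
    by (auto intro!: derivative_eq_intros)
  from has_derivative_compose[OF this, of f f'] assms(1)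
  have "((\<lambda>t. f (x + t *\<^sub>R d)) has_derivative (\<lambda>t. f' (t *\<^sub>R d))) (at 0 within {0<..})"
    by simp
  then have "((\<lambda>t. f (x + t *\<^sub>R d)) has_field_derivative f' d) (at 0 within {0<..})"
    using linear_cmul[OF has_derivative_linear[OF assms(1)]]
    by (simp add: has_field_derivative_def mult.commute[of _ "f' d"])
  then have "((\<lambda>t. (f (x + t *\<^sub>R d) - f x) / t) \<longlongrightarrow> f' d) (at_right 0)"
    unfolding has_field_derivative_iff by simp
  moreover have "\<forall>\<^sub>F t in at_right 0. (f (x + t *\<^sub>R d) - f x) / t \<le> c"
    using assms(2) eventually_at_right_less[of 0]
    by eventually_elim (simp add: divide_le_eq mult.commute)
  ultimately show ?thesis
    by (rule tendsto_upperbound) simp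
qed

lemma gderiv_diff_in_subdiff_at_minimizer:
  fixes \<phi>1 \<phi>2 :: "'a::real_inner \<Rightarrow> real"
  assumes convex: "convex_on UNIV \<phi>2" and min: "is_minimizer \<phi>1 x"
    and grad: "GDERIV (\<lambda>z. \<phi>2 z - \<phi>1 z) x :> g"
  shows "g \<in> subdiff \<phi>2 x"
  unfolding subdiff_def
proof (intro CollectI allI)
  fix z
  let ?h = "\<lambda>z. \<phi>2 z - \<phi>1 z"
  have "?h (x + t *\<^sub>R (z - x)) - ?h x \<le> t * (\<phi>2 z - \<phi>2 x)" if "0 < t" "t < 1" for t
  proof -
    have "\<phi>2 ((1 - t) *\<^sub>R x + t *\<^sub>R z) \<le> (1 - t) * \<phi>2 x + t * \<phi>2 z"
      using convex_onD[OF convex] that by simp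
    moreover have "\<phi>1 x \<le> \<phi>1 (x + t *\<^sub>R (z - x))"
      using min unfolding is_minimizer_def by blast
    ultimately show ?thesis by (simp add: algebra_simps)
  qed
  then have "\<forall>\<^sub>F t in at_right 0. ?h (x + t *\<^sub>R (z - x)) - ?h x \<le> t * (\<phi>2 z - \<phi>2 x)"
    unfolding eventually_at_right_field by (intro exI[of _ 1]) simp
  with grad have "inner (z - x) g \<le> \<phi>2 z - \<phi>2 x"
    unfolding gderiv_def by (rule has_derivative_le_if_eventually_increment_le)
  then show "\<phi>2 x + inner g (z - x) \<le> \<phi>2 z"
    by (simp add: inner_commute)
qed

lemma gradient_growth_at_minimizers:
  fixes \<phi>1 \<phi>2 :: "'a::real_inner \<Rightarrow> real"
  assumes growth: "gradient_growth \<nu> \<phi>2"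
    and "is_minimizer \<phi>1 x1" "is_minimizer \<phi>2 x2"
    and "GDERIV (\<lambda>z. \<phi>2 z - \<phi>1 z) x1 :> g"
  shows "\<nu> (norm (x1 - x2)) \<le> ereal (inner (x1 - x2) g)"
proof -
  have "convex_on UNIV \<phi>2"
    using growth unfolding gradient_growth_def by (blast intro: convex_on_UNIV_if_subdifferentiable)
  then have "g \<in> subdiff \<phi>2 x1"
    using assms(2,4) by (rule gderiv_diff_in_subdiff_at_minimizer)
  moreover have "0 \<in> subdiff \<phi>2 x2"
    using assms(3) by (simp add: zero_in_subdiff_iff_minimizer)
  ultimately have "\<nu> (norm (x2 - x1)) \<le> ereal (inner (x1 - x2) (g - 0))"
    using growth unfolding gradient_growth_def by blast
  then show ?thesis by (simp add: norm_minus_commute)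
qed

theorem lemma1:
  fixes \<phi>1 \<phi>2 :: "real^'d \<Rightarrow> real" and x1 x2 :: "real^'d"
    and \<omega>1 \<omega>2 :: "real \<Rightarrow> real"
  assumes "admissible_modulus \<omega>1" and "admissible_modulus \<omega>2"
    and "is_minimizer \<phi>1 x1" and "is_minimizer \<phi>2 x2"
  shows "(error_bound (gen_inv \<omega>1) \<phi>1 \<and> error_bound (gen_inv \<omega>2) \<phi>2 \<longrightarrow>
            gen_inv \<omega>1 (norm (x1 - x2)) + gen_inv \<omega>2 (norm (x1 - x2))
              \<le> ereal (\<phi>2 x1 - \<phi>1 x1 - (\<phi>2 x2 - \<phi>1 x2)))
       \<and> (\<forall>g. (\<forall>x. (\<lambda>z. \<phi>2 z - \<phi>1 z) differentiable (at x))
              \<and> (GDERIV (\<lambda>z. \<phi>2 z - \<phi>1 z) x1 :> g)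
              \<and> gradient_growth (gen_inv \<omega>2) \<phi>2 \<longrightarrow>
            gen_inv \<omega>2 (norm (x1 - x2)) \<le> ereal (inner (x1 - x2) g))"
  using error_bounds_at_minimizers[OF _ _ assms(3,4)]
    gradient_growth_at_minimizers[OF _ assms(3,4)]
  by blast

end
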